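(* In the setting of the context, fix $\varrho>0$. For $\kappa>0$ big enough there exists a constant $C>0$ independent of $\kappa$ such that, for any $Z\in B(\varrho)$, $$\|\mathcal R_1[Z]\|_{11/3}\le C,\qquad\|\mathcal R_j[Z]\|_{4/3}\le C,\ j=2,3,$$ and $$\|\partial_W\mathcal R_1[Z]\|_3\le C,\quad\|\partial_X\mathcal R_1[Z]\|_{7/3}\le C,\quad\|\partial_Y\mathcal R_1[Z]\|_{7/3}\le C,$$ $$\|\partial_W\mathcal R_j[Z]\|_{2/3}\le C,\quad\|\partial_X\mathcal R_j[Z]\|_2\le C,\quad\|\partial_Y\mathcal R_j[Z]\|_2\le C,\quad j=2,3.$$
   Context: Inner equation: $\mathcal K=-\tfrac34U^{2/3}W^2-\frac1{3U^{2/3}}\big((1+\mathcal J)^{-1/2}-1\big)$ with $\mathcal J=\frac{4W^2}{9U^{2/3}}-\frac{16W}{27U^{4/3}}+\frac{16}{81U^2}+\frac{4(X+Y)}{9U}\big(W-\frac2{3U^{2/3}}\big)-\frac{4i(X-Y)}{3U^{2/3}}-\frac{X^2+Y^2}{3U^{4/3}}+\frac{10XY}{9U^{4/3}}$; $Z=(W,X,Y)$, $\mathcal A=\mathrm{diag}(0,i,-i)$, $f=(-\partial_U\mathcal K,i\partial_Y\mathcal K,-i\partial_X\mathcal K)^T$, $g=\partial_W\mathcal K$. For $U$ and $\zeta=(W,X,Y)$ let $\mathcal R(U,\zeta)=\frac{f(U,\zeta)-g(U,\zeta)\mathcal A\zeta}{1+g(U,\zeta)}$; for a function $\varphi$ of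 $U$, $\mathcal R[\varphi](U)=\mathcal R(U,\varphi(U))$ and $\partial_W\mathcal R_j[\varphi](U)=(\partial_W\mathcal R_j)(U,\varphi(U))$, and similarly for $X,Y$. Fix $\beta_0\in(0,\tfrac\pi2)$; $D^u_\kappa=\{U\in\mathbb C:|\operatorname{Im}U|\ge\tan\beta_0\operatorname{Re}U+\kappa\}$, with fractional powers of $U$ given by a continuous determination of $\arg U$ on $D^u_\kappa$ with $\arg U\in(-\pi,0)$ for $\operatorname{Im}U<0$. $\|\varphi\|_\nu=\sup_{U\in D^u_\kappa}|U^\nu\varphi(U)|$, $\mathcal X_\nu$ the space of analytic $\varphi$ on $D^u_\kappa$ with $\|\varphi\|_\nu<\infty$, $\|\varphi\|_\times=\|\varphi_1\|_{8/3}+\|\varphi_2\|_{4/3}+\|\varphi_3\|_{4/3}$, and $B(\varrho)=\{\varphi\in\mathcal X_{8/3}\times\mathcal X_{4/3}\times\mathcal X_{4/3}:\|\varphi\|_\times\le\varrho\}$. *)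

theory Defs
  imports "HOL-Analysis.Analysis"
begin

definition Dk :: "real \<Rightarrow> real \<Rightarrow> complex set" where
  "Dk beta0 kappa = {U. \<bar>Im U\<bar> \<ge> tan beta0 * Re U + kappa}"

text \<open>Logarithm with the continuous determination of arg U used on D^u_kappa:
  arg U in (-pi,0) for Im U < 0, arg U = -pi on the negative real axis,
  arg U in (-2pi,-pi) for Im U > 0.\<close>
definition LnD :: "complex \<Rightarrow> complex" where
  "LnD U = (if Im (Ln U) > 0 then Ln U - 2 * of_real pi * \<i> else Ln U)"

definition powD :: "complex \<Rightarrow> real \<Rightarrow> complex" where
  "powD U a = exp (of_real a * LnD U)"

definition Jf :: "complex \<Rightarrow> complex \<Rightarrow> complex \<Rightarrow> complex \<Rightarrow> complex" where
  "Jf U W X Y =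
     4 * W^2 / (9 * powD U (2/3)) - 16 * W / (27 * powD U (4/3)) + 16 / (81 * U^2)
     + 4 * (X + Y) / (9 * U) * (W - 2 / (3 * powD U (2/3)))
     - 4 * \<i> * (X - Y) / (3 * powD U (2/3))
     - (X^2 + Y^2) / (3 * powD U (4/3)) + 10 * X * Y / (9 * powD U (4/3))"

text \<open>(1+J)^(-1/2) uses the principal branch.\<close>
definition Kf :: "complex \<Rightarrow> complex \<Rightarrow> complex \<Rightarrow> complex \<Rightarrow> complex" where
  "Kf U W X Y = - (3/4) * powD U (2/3) * W^2
     - 1 / (3 * powD U (2/3)) * ((1 + Jf U W X Y) powr (-1/2) - 1)"

definition gK :: "complex \<Rightarrow> complex \<Rightarrow> complex \<Rightarrow> complex \<Rightarrow> complex" where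
  "gK U W X Y = deriv (\<lambda>w. Kf U w X Y) W"

definition f1 :: "complex \<Rightarrow> complex \<Rightarrow> complex \<Rightarrow> complex \<Rightarrow> complex" where
  "f1 U W X Y = - deriv (\<lambda>u. Kf u W X Y) U"

definition f2 :: "complex \<Rightarrow> complex \<Rightarrow> complex \<Rightarrow> complex \<Rightarrow> complex" where
  "f2 U W X Y = \<i> * deriv (\<lambda>y. Kf U W X y) Y"

definition f3 :: "complex \<Rightarrow> complex \<Rightarrow> complex \<Rightarrow> complex \<Rightarrow> complex" where
  "f3 U W X Y = - \<i> * deriv (\<lambda>x. Kf U W x Y) X"

text \<open>R = (f - g A zeta)/(1+g) with A = diag(0,i,-i), componentwise.\<close>
definition R1 :: "complex \<Rightarrow> complex \<Rightarrow> complex \<Rightarrow> complex \<Rightarrow> complex" where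
  "R1 U W X Y = f1 U W X Y / (1 + gK U W X Y)"

definition R2 :: "complex \<Rightarrow> complex \<Rightarrow> complex \<Rightarrow> complex \<Rightarrow> complex" where
  "R2 U W X Y = (f2 U W X Y - gK U W X Y * (\<i> * X)) / (1 + gK U W X Y)"

definition R3 :: "complex \<Rightarrow> complex \<Rightarrow> complex \<Rightarrow> complex \<Rightarrow> complex" where
  "R3 U W X Y = (f3 U W X Y - gK U W X Y * (- \<i> * Y)) / (1 + gK U W X Y)"

definition dW :: "(complex \<Rightarrow> complex \<Rightarrow> complex \<Rightarrow> complex \<Rightarrow> complex)
    \<Rightarrow> complex \<Rightarrow> complex \<Rightarrow> complex \<Rightarrow> complex \<Rightarrow> complex" where
  "dW F U W X Y = deriv (\<lambda>w. F U w X Y) W"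

definition dX :: "(complex \<Rightarrow> complex \<Rightarrow> complex \<Rightarrow> complex \<Rightarrow> complex)
    \<Rightarrow> complex \<Rightarrow> complex \<Rightarrow> complex \<Rightarrow> complex \<Rightarrow> complex" where
  "dX F U W X Y = deriv (\<lambda>x. F U W x Y) X"

definition dY :: "(complex \<Rightarrow> complex \<Rightarrow> complex \<Rightarrow> complex \<Rightarrow> complex)
    \<Rightarrow> complex \<Rightarrow> complex \<Rightarrow> complex \<Rightarrow> complex \<Rightarrow> complex" where
  "dY F U W X Y = deriv (\<lambda>y. F U W X y) Y"

definition wnorm :: "real \<Rightarrow> real \<Rightarrow> real \<Rightarrow> (complex \<Rightarrow> complex) \<Rightarrow> ereal" where
  "wnorm beta0 kappa nu phi = (SUP U\<in>Dk beta0 kappa. ereal (norm U powr nu * cmod (phi U)))"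

definition Xsp :: "real \<Rightarrow> real \<Rightarrow> real \<Rightarrow> (complex \<Rightarrow> complex) \<Rightarrow> bool" where
  "Xsp beta0 kappa nu phi \<longleftrightarrow> phi analytic_on Dk beta0 kappa \<and> wnorm beta0 kappa nu phi < \<infinity>"

definition inBall :: "real \<Rightarrow> real \<Rightarrow> real \<Rightarrow> (complex \<Rightarrow> complex) \<Rightarrow> (complex \<Rightarrow> complex)
    \<Rightarrow> (complex \<Rightarrow> complex) \<Rightarrow> bool" where
  "inBall beta0 kappa rho W X Y \<longleftrightarrow>
     Xsp beta0 kappa (8/3) W \<and> Xsp beta0 kappa (4/3) X \<and> Xsp beta0 kappa (4/3) Y \<and>
     wnorm beta0 kappa (8/3) W + wnorm beta0 kappa (4/3) X + wnorm beta0 kappa (4/3) Y \<le> ereal rho"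

end

theory Submission
  imports Defs
begin

(*
  In Laurent form, i.e. as sums of monomials in W, X, Y times powers U^q, J and all partial
  derivatives of K up to order two are explicit expressions in powers of U, in W, X, Y and in
  (1 + J)^s. On B(rho) one has |W| \<le> rho |U|^(-8/3) and |X|, |Y| \<le> rho |U|^(-4/3), so each
  such expression is O(|U|^e) uniformly, with e obtained by adding exponents along products and
  taking maxima along sums. In particular J = O(|U|^-2) and g = K_W = O(|U|^-2), so for large |U|
  the powers (1 + J)^s are bounded, (1 + J)^(-1/2) - 1 = O(|U|^-2) and 1 + g stays away from 0.
  The components of R are quotients by 1 + g, their partial derivatives follow from the quotient
  rule, and the same bookkeeping gives the stated weights. Finally, for kappa large every
  U \<in> D^u_kappa is off [0, \<infinity>) and as large as needed.
*)

lemma norm_one_plus_ge: "norm (z::'a::real_normed_algebra_1) \<le> 1/2 \<Longrightarrow> 1/2 \<le> norm (1 + z)"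
  using norm_diff_ineq[of 1 z] by simp

lemma norm_one_plus_square_ge: "cmod (z::complex) \<le> 1/2 \<Longrightarrow> 1/4 \<le> cmod ((1 + z)^2)"
  using mult_mono[OF norm_one_plus_ge norm_one_plus_ge, of z z]
  by (simp add: norm_power norm_mult power2_eq_square)

lemma one_plus_not_nonpos_Reals: "cmod (z::complex) \<le> 1/2 \<Longrightarrow> 1 + z \<notin> \<real>\<^sub>\<le>\<^sub>0"
  using abs_Re_le_cmod[of z] by (auto simp: complex_nonpos_Reals_iff)

lemma norm_one_plus_powr_minus_half_minus_one:
  assumes "cmod (z::complex) \<le> 1/2"
  shows "cmod ((1 + z) powr (-1/2) - 1) \<le> 2 * cmod z"
proof -
  let ?S = "cball (0::complex) (1/2)"
  have deriv: "((\<lambda>z. (1 + z) powr (-1/2)) has_field_derivative (-1/2) * (1 + w) powr (-3/2))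
      (at w within ?S)" if "w \<in> ?S" for w
    using one_plus_not_nonpos_Reals[of w] that
    by (auto intro!: derivative_eq_intros simp: dist_norm)
  have bound: "cmod ((-1/2) * (1 + w) powr (-3/2)) \<le> 2" if "w \<in> ?S" for w
  proof -
    have "1/2 \<le> cmod (1 + w)" using that by (intro norm_one_plus_ge) (simp add: dist_norm)
    have "cmod ((-1/2) * (1 + w) powr (-3/2)) = 1/2 * cmod (1 + w) powr (-3/2)"
      by (subst norm_mult, subst norm_powr_real_powr') auto
    also have "\<dots> \<le> 1/2 * (1/2) powr (-3/2)"
      using \<open>1/2 \<le> cmod (1 + w)\<close> by (intro mult_left_mono powr_mono2') auto
    also have "\<dots> \<le> 1/2 * (1/2) powr (-2)" by (intro mult_left_mono powr_mono') auto
    also have "\<dots> = 2" by (simp add: powr_minus_divide power2_eq_square)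
    finally show ?thesis .
  qed
  have "cmod ((1 + z) powr (-1/2) - (1 + 0) powr (-1/2)) \<le> 2 * cmod (z - 0)"
    by (rule field_differentiable_bound[OF convex_cball deriv bound])
       (use assms in \<open>auto simp: dist_norm\<close>)
  then show ?thesis by simp
qed

lemma open_preimage_not_nonpos_Reals:
  fixes f :: "'a::topological_space \<Rightarrow> complex"
  assumes "continuous_on UNIV f"
  shows "open {z. f z \<notin> \<real>\<^sub>\<le>\<^sub>0}"
  using open_vimage[OF open_Compl[OF closed_nonpos_Reals_complex] assms] by (simp add: vimage_def)

lemma deriv_quotient_on_open:
  fixes f n d :: "'a::real_normed_field \<Rightarrow> 'a"
  assumes "open S" "z \<in> S" "\<And>w. w \<in> S \<Longrightarrow> f w = n w / d w"
    and "(n has_field_derivative n') (at z)" "(d has_field_derivative d') (at z)" "d z \<noteq> 0"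
  shows "deriv f z = (n' * d z - n z * d') / (d z)^2"
proof -
  have "((\<lambda>w. n w / d w) has_field_derivative (n' * d z - n z * d') / (d z * d z)) (at z)"
    using assms(4-6) by (rule DERIV_divide)
  then have "(f has_field_derivative (n' * d z - n z * d') / (d z * d z)) (at z)"
    by (rule has_field_derivative_transform_within_open[OF _ assms(1,2)]) (simp add: assms(3))
  then show ?thesis by (simp add: DERIV_imp_deriv power2_eq_square)
qed

section \<open>The branch of fractional powers\<close>

lemma LnD_eq_Ln_minus:
  assumes "U \<notin> \<real>\<^sub>\<ge>\<^sub>0"
  shows "LnD U = Ln (- U) - \<i> * pi"
proof -
  have "U \<noteq> 0" using assms by auto
  show ?thesis
  proof (cases "Im U < 0")
    case True
    then have "Im (Ln U) \<le> 0"
      using Im_Ln_pos_le[OF \<open>U \<noteq> 0\<close>] Im_Ln_le_pi[OF \<open>U \<noteq> 0\<close>] by auto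
    with True show ?thesis by (simp add: LnD_def Ln_minus \<open>U \<noteq> 0\<close>)
  next
    case False
    then have "0 < Im U \<or> (Im U = 0 \<and> Re U < 0)"
      using assms by (auto simp: complex_nonneg_Reals_iff)
    then have "0 < Im (Ln U)"
      using Im_Ln_pos_lt_imp Im_Ln_eq_pi[OF \<open>U \<noteq> 0\<close>] by auto
    moreover have "Ln (- U) = Ln U - \<i> * pi"
      using False assms \<open>U \<noteq> 0\<close> by (auto simp: Ln_minus complex_nonneg_Reals_iff)
    ultimately show ?thesis by (simp add: LnD_def)
  qed
qed

lemma powD_add: "powD U a * powD U b = powD U (a + b)"
  by (simp add: powD_def exp_add[symmetric] distrib_right)

lemma powD_minus: "powD U (- a) = inverse (powD U a)"
  by (simp add: powD_def exp_minus)

lemma powD_nonzero [simp]: "powD U a \<noteq> 0"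
  by (simp add: powD_def)

lemma powD_1: "U \<noteq> 0 \<Longrightarrow> powD U 1 = U"
  by (simp add: powD_def LnD_def exp_diff)

lemma norm_powD: "U \<noteq> 0 \<Longrightarrow> cmod (powD U a) = cmod U powr a"
  by (simp add: powD_def LnD_def powr_def)

lemma powD_has_field_derivative [derivative_intros]:
  assumes "U \<notin> \<real>\<^sub>\<ge>\<^sub>0"
  shows "((\<lambda>u. powD u a) has_field_derivative of_real a * powD U (a - 1)) (at U within S)"
proof -
  have "- U \<notin> \<real>\<^sub>\<le>\<^sub>0" "U \<noteq> 0"
    using assms by (auto simp: complex_nonneg_Reals_iff complex_nonpos_Reals_iff)
  have "powD U (a - 1) = powD U a * inverse U"
    using powD_add[of U a "-1"] powD_minus[of U 1] powD_1[OF \<open>U \<noteq> 0\<close>] by simp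
  then have "((\<lambda>u. exp (of_real a * (Ln (- u) - \<i> * pi))) has_field_derivative
      of_real a * powD U (a - 1)) (at U)"
    by (auto intro!: derivative_eq_intros \<open>- U \<notin> \<real>\<^sub>\<le>\<^sub>0\<close>
        simp: powD_def LnD_eq_Ln_minus[OF assms] field_simps)
  then have "((\<lambda>u. powD u a) has_field_derivative of_real a * powD U (a - 1)) (at U)"
    by (rule has_field_derivative_transform_within_open
          [OF _ open_Compl[OF closed_nonneg_Reals_complex]])
       (use assms in \<open>auto simp: powD_def LnD_eq_Ln_minus\<close>)
  then show ?thesis by (rule has_field_derivative_at_within)
qed

section \<open>Laurent form of \<open>J\<close> and \<open>K\<close> and their partial derivatives\<close>

(* Jf with every quotient by a power of U written as a power with negative exponent, so that
   derivatives and growth bounds can be taken term by term. *)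
definition J :: "complex \<Rightarrow> complex \<Rightarrow> complex \<Rightarrow> complex \<Rightarrow> complex" where
  "J U W X Y = 4/9*W^2*powD U (-2/3) - 16/27*W*powD U (-4/3) + 16/81*powD U (-2)
     + 4/9*(X+Y)*W*powD U (-1) - 8/27*(X+Y)*powD U (-5/3) - 4*\<i>/3*(X-Y)*powD U (-2/3)
     - 1/3*(X^2+Y^2)*powD U (-4/3) + 10/9*X*Y*powD U (-4/3)"

definition J_U :: "complex \<Rightarrow> complex \<Rightarrow> complex \<Rightarrow> complex \<Rightarrow> complex" where
  "J_U U W X Y = -8/27*W^2*powD U (-5/3) + 64/81*W*powD U (-7/3) - 32/81*powD U (-3)
     - 4/9*(X+Y)*W*powD U (-2) + 40/81*(X+Y)*powD U (-8/3) + 8*\<i>/9*(X-Y)*powD U (-5/3)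
     + 4/9*(X^2+Y^2)*powD U (-7/3) - 40/27*X*Y*powD U (-7/3)"

definition J_W :: "complex \<Rightarrow> complex \<Rightarrow> complex \<Rightarrow> complex \<Rightarrow> complex" where
  "J_W U W X Y = 8/9*W*powD U (-2/3) - 16/27*powD U (-4/3) + 4/9*(X+Y)*powD U (-1)"

definition J_X :: "complex \<Rightarrow> complex \<Rightarrow> complex \<Rightarrow> complex \<Rightarrow> complex" where
  "J_X U W X Y = 4/9*W*powD U (-1) - 8/27*powD U (-5/3) - 4*\<i>/3*powD U (-2/3)
     - 2/3*X*powD U (-4/3) + 10/9*Y*powD U (-4/3)"

definition J_Y :: "complex \<Rightarrow> complex \<Rightarrow> complex \<Rightarrow> complex \<Rightarrow> complex" where
  "J_Y U W X Y = 4/9*W*powD U (-1) - 8/27*powD U (-5/3) + 4*\<i>/3*powD U (-2/3)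
     - 2/3*Y*powD U (-4/3) + 10/9*X*powD U (-4/3)"

definition J_UW :: "complex \<Rightarrow> complex \<Rightarrow> complex \<Rightarrow> complex \<Rightarrow> complex" where
  "J_UW U W X Y = -16/27*W*powD U (-5/3) + 64/81*powD U (-7/3) - 4/9*(X+Y)*powD U (-2)"

definition J_UX :: "complex \<Rightarrow> complex \<Rightarrow> complex \<Rightarrow> complex \<Rightarrow> complex" where
  "J_UX U W X Y = -4/9*W*powD U (-2) + 40/81*powD U (-8/3) + 8*\<i>/9*powD U (-5/3)
     + 8/9*X*powD U (-7/3) - 40/27*Y*powD U (-7/3)"

definition J_UY :: "complex \<Rightarrow> complex \<Rightarrow> complex \<Rightarrow> complex \<Rightarrow> complex" where
  "J_UY U W X Y = -4/9*W*powD U (-2) + 40/81*powD U (-8/3) - 8*\<i>/9*powD U (-5/3)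
     + 8/9*Y*powD U (-7/3) - 40/27*X*powD U (-7/3)"

lemma Jf_eq_J:
  assumes "U \<noteq> 0"
  shows "Jf U W X Y = J U W X Y"
proof -
  have inv: "powD U (-1) = inverse U" "powD U (-2/3) = inverse (powD U (2/3))"
    "powD U (-4/3) = inverse (powD U (4/3))"
    using powD_minus[of U] powD_1[OF assms] by simp_all
  have "powD U (-2) = inverse U ^ 2" "powD U (-5/3) = inverse U * inverse (powD U (2/3))"
    using powD_add[of U "-1" "-1"] powD_add[of U "-1" "-2/3"] inv
    by (simp_all add: power2_eq_square)
  note powers = inv this
  show ?thesis
    unfolding Jf_def J_def powers using assms by (simp add: field_simps power2_eq_square)
qed

lemma J_has_partial_derivative_U [derivative_intros]:
  "U \<notin> \<real>\<^sub>\<ge>\<^sub>0 \<Longrightarrow> ((\<lambda>u. J u W X Y) has_field_derivative J_U U W X Y) (at U within S)"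
  unfolding J_def J_U_def
  by (rule derivative_eq_intros refl | assumption)+ (simp add: field_simps)

lemma J_has_partial_derivatives [derivative_intros]:
  "((\<lambda>w. J U w X Y) has_field_derivative J_W U w X Y) (at w within S)"
  "((\<lambda>x. J U W x Y) has_field_derivative J_X U W x Y) (at x within S)"
  "((\<lambda>y. J U W X y) has_field_derivative J_Y U W X y) (at y within S)"
  unfolding J_def J_W_def J_X_def J_Y_def
  by (rule derivative_eq_intros refl | simp add: algebra_simps)+

lemma J_U_has_partial_derivatives [derivative_intros]:
  "((\<lambda>w. J_U U w X Y) has_field_derivative J_UW U w X Y) (at w within S)"
  "((\<lambda>x. J_U U W x Y) has_field_derivative J_UX U W x Y) (at x within S)"
  "((\<lambda>y. J_U U W X y) has_field_derivative J_UY U W X y) (at y within S)"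
  unfolding J_U_def J_UW_def J_UX_def J_UY_def
  by (rule derivative_eq_intros refl | simp add: algebra_simps)+

lemma J_W_has_partial_derivatives [derivative_intros]:
  "((\<lambda>w. J_W U w X Y) has_field_derivative 8/9 * powD U (-2/3)) (at w within S)"
  "((\<lambda>x. J_W U W x Y) has_field_derivative 4/9 * powD U (-1)) (at x within S)"
  "((\<lambda>y. J_W U W X y) has_field_derivative 4/9 * powD U (-1)) (at y within S)"
  unfolding J_W_def
  by (rule derivative_eq_intros refl | simp add: algebra_simps)+

lemma J_X_has_partial_derivatives [derivative_intros]:
  "((\<lambda>w. J_X U w X Y) has_field_derivative 4/9 * powD U (-1)) (at w within S)"
  "((\<lambda>x. J_X U W x Y) has_field_derivative -2/3 * powD U (-4/3)) (at x within S)"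
  "((\<lambda>y. J_X U W X y) has_field_derivative 10/9 * powD U (-4/3)) (at y within S)"
  unfolding J_X_def
  by (rule derivative_eq_intros refl | simp add: algebra_simps)+

lemma J_Y_has_partial_derivatives [derivative_intros]:
  "((\<lambda>w. J_Y U w X Y) has_field_derivative 4/9 * powD U (-1)) (at w within S)"
  "((\<lambda>x. J_Y U W x Y) has_field_derivative 10/9 * powD U (-4/3)) (at x within S)"
  "((\<lambda>y. J_Y U W X y) has_field_derivative -2/3 * powD U (-4/3)) (at y within S)"
  unfolding J_Y_def
  by (rule derivative_eq_intros refl | simp add: algebra_simps)+

definition Q :: "complex \<Rightarrow> complex \<Rightarrow> complex \<Rightarrow> complex \<Rightarrow> complex \<Rightarrow> complex" where
  "Q s U W X Y = (1 + J U W X Y) powr s"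

definition K :: "complex \<Rightarrow> complex \<Rightarrow> complex \<Rightarrow> complex \<Rightarrow> complex" where
  "K U W X Y = - (3/4) * powD U (2/3) * W^2 - powD U (-2/3) / 3 * (Q (-1/2) U W X Y - 1)"

definition K_domain :: "complex \<Rightarrow> complex \<Rightarrow> complex \<Rightarrow> complex \<Rightarrow> bool" where
  "K_domain U W X Y \<longleftrightarrow> U \<notin> \<real>\<^sub>\<ge>\<^sub>0 \<and> 1 + J U W X Y \<notin> \<real>\<^sub>\<le>\<^sub>0"

lemma K_domainD:
  assumes "K_domain U W X Y"
  shows "U \<notin> \<real>\<^sub>\<ge>\<^sub>0" and "1 + J U W X Y \<notin> \<real>\<^sub>\<le>\<^sub>0"
  using assms by (simp_all add: K_domain_def)

definition K_U :: "complex \<Rightarrow> complex \<Rightarrow> complex \<Rightarrow> complex \<Rightarrow> complex" where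
  "K_U U W X Y = -(1/2)*powD U (-1/3)*W^2 + 2/9*powD U (-5/3)*(Q (-1/2) U W X Y - 1)
     + 1/6*powD U (-2/3)*Q (-3/2) U W X Y*J_U U W X Y"

definition K_W :: "complex \<Rightarrow> complex \<Rightarrow> complex \<Rightarrow> complex \<Rightarrow> complex" where
  "K_W U W X Y = -(3/2)*powD U (2/3)*W + 1/6*powD U (-2/3)*Q (-3/2) U W X Y*J_W U W X Y"

definition K_X :: "complex \<Rightarrow> complex \<Rightarrow> complex \<Rightarrow> complex \<Rightarrow> complex" where
  "K_X U W X Y = 1/6*powD U (-2/3)*Q (-3/2) U W X Y*J_X U W X Y"

definition K_Y :: "complex \<Rightarrow> complex \<Rightarrow> complex \<Rightarrow> complex \<Rightarrow> complex" where
  "K_Y U W X Y = 1/6*powD U (-2/3)*Q (-3/2) U W X Y*J_Y U W X Y"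

(* H2 Ja Jb Jab is the second derivative of - powD U (-2/3) / 3 * (Q (-1/2) - 1) in two of
   the directions W, X, Y, where Ja, Jb, Jab are the corresponding derivatives of J. *)
definition H2 :: "complex \<Rightarrow> complex \<Rightarrow> complex \<Rightarrow> complex \<Rightarrow> complex \<Rightarrow> complex \<Rightarrow> complex \<Rightarrow> complex" where
  "H2 U W X Y Ja Jb Jab = 1/6*powD U (-2/3)*(-3/2*Q (-5/2) U W X Y*Ja*Jb + Q (-3/2) U W X Y*Jab)"

definition K_UW :: "complex \<Rightarrow> complex \<Rightarrow> complex \<Rightarrow> complex \<Rightarrow> complex" where
  "K_UW U W X Y = - powD U (-1/3)*W - 1/9*powD U (-5/3)*Q (-3/2) U W X Y*J_W U W X Y
     + H2 U W X Y (J_U U W X Y) (J_W U W X Y) (J_UW U W X Y)"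

definition K_UX :: "complex \<Rightarrow> complex \<Rightarrow> complex \<Rightarrow> complex \<Rightarrow> complex" where
  "K_UX U W X Y = - 1/9*powD U (-5/3)*Q (-3/2) U W X Y*J_X U W X Y
     + H2 U W X Y (J_U U W X Y) (J_X U W X Y) (J_UX U W X Y)"

definition K_UY :: "complex \<Rightarrow> complex \<Rightarrow> complex \<Rightarrow> complex \<Rightarrow> complex" where
  "K_UY U W X Y = - 1/9*powD U (-5/3)*Q (-3/2) U W X Y*J_Y U W X Y
     + H2 U W X Y (J_U U W X Y) (J_Y U W X Y) (J_UY U W X Y)"

definition K_WW :: "complex \<Rightarrow> complex \<Rightarrow> complex \<Rightarrow> complex \<Rightarrow> complex" where
  "K_WW U W X Y = - 3/2*powD U (2/3) + H2 U W X Y (J_W U W X Y) (J_W U W X Y) (8/9*powD U (-2/3))"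

definition K_WX :: "complex \<Rightarrow> complex \<Rightarrow> complex \<Rightarrow> complex \<Rightarrow> complex" where
  "K_WX U W X Y = H2 U W X Y (J_W U W X Y) (J_X U W X Y) (4/9*powD U (-1))"

definition K_WY :: "complex \<Rightarrow> complex \<Rightarrow> complex \<Rightarrow> complex \<Rightarrow> complex" where
  "K_WY U W X Y = H2 U W X Y (J_W U W X Y) (J_Y U W X Y) (4/9*powD U (-1))"

definition K_XX :: "complex \<Rightarrow> complex \<Rightarrow> complex \<Rightarrow> complex \<Rightarrow> complex" where
  "K_XX U W X Y = H2 U W X Y (J_X U W X Y) (J_X U W X Y) (-2/3*powD U (-4/3))"

definition K_XY :: "complex \<Rightarrow> complex \<Rightarrow> complex \<Rightarrow> complex \<Rightarrow> complex" where
  "K_XY U W X Y = H2 U W X Y (J_X U W X Y) (J_Y U W X Y) (10/9*powD U (-4/3))"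

definition K_YY :: "complex \<Rightarrow> complex \<Rightarrow> complex \<Rightarrow> complex \<Rightarrow> complex" where
  "K_YY U W X Y = H2 U W X Y (J_Y U W X Y) (J_Y U W X Y) (-2/3*powD U (-4/3))"

lemma K_has_partial_derivatives:
  assumes "K_domain U W X Y"
  shows "((\<lambda>u. K u W X Y) has_field_derivative K_U U W X Y) (at U)"
    and "((\<lambda>w. K U w X Y) has_field_derivative K_W U W X Y) (at W)"
    and "((\<lambda>x. K U W x Y) has_field_derivative K_X U W X Y) (at X)"
    and "((\<lambda>y. K U W X y) has_field_derivative K_Y U W X Y) (at Y)"
  unfolding K_def K_U_def K_W_def K_X_def K_Y_def Q_def
  by (rule derivative_eq_intros refl K_domainD[OF assms]
      | (simp; fail) | (simp add: algebra_simps; fail) | (simp add: field_simps; fail))+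

lemma K_U_has_partial_derivatives:
  assumes "K_domain U W X Y"
  shows "((\<lambda>w. K_U U w X Y) has_field_derivative K_UW U W X Y) (at W)"
    and "((\<lambda>x. K_U U W x Y) has_field_derivative K_UX U W X Y) (at X)"
    and "((\<lambda>y. K_U U W X y) has_field_derivative K_UY U W X Y) (at Y)"
  unfolding K_U_def K_UW_def K_UX_def K_UY_def H2_def Q_def
  by (rule derivative_eq_intros refl K_domainD[OF assms]
      | (simp; fail) | (simp add: algebra_simps; fail) | (simp add: field_simps; fail))+

lemma K_W_has_partial_derivatives:
  assumes "K_domain U W X Y"
  shows "((\<lambda>w. K_W U w X Y) has_field_derivative K_WW U W X Y) (at W)"
    and "((\<lambda>x. K_W U W x Y) has_field_derivative K_WX U W X Y) (at X)"
    and "((\<lambda>y. K_W U W X y) has_field_derivative K_WY U W X Y) (at Y)"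
  unfolding K_W_def K_WW_def K_WX_def K_WY_def H2_def Q_def
  by (rule derivative_eq_intros refl K_domainD[OF assms]
      | (simp; fail) | (simp add: algebra_simps; fail) | (simp add: field_simps; fail))+

lemma K_X_has_partial_derivatives:
  assumes "K_domain U W X Y"
  shows "((\<lambda>w. K_X U w X Y) has_field_derivative K_WX U W X Y) (at W)"
    and "((\<lambda>x. K_X U W x Y) has_field_derivative K_XX U W X Y) (at X)"
    and "((\<lambda>y. K_X U W X y) has_field_derivative K_XY U W X Y) (at Y)"
  unfolding K_X_def K_WX_def K_XX_def K_XY_def H2_def Q_def
  by (rule derivative_eq_intros refl K_domainD[OF assms]
      | (simp; fail) | (simp add: algebra_simps; fail) | (simp add: field_simps; fail))+

lemma K_Y_has_partial_derivatives:
  assumes "K_domain U W X Y"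
  shows "((\<lambda>w. K_Y U w X Y) has_field_derivative K_WY U W X Y) (at W)"
    and "((\<lambda>x. K_Y U W x Y) has_field_derivative K_XY U W X Y) (at X)"
    and "((\<lambda>y. K_Y U W X y) has_field_derivative K_YY U W X Y) (at Y)"
  unfolding K_Y_def K_WY_def K_XY_def K_YY_def H2_def Q_def
  by (rule derivative_eq_intros refl K_domainD[OF assms]
      | (simp; fail) | (simp add: algebra_simps; fail) | (simp add: field_simps; fail))+

lemma Kf_eq_K:
  assumes "U \<noteq> 0"
  shows "Kf U W X Y = K U W X Y"
proof -
  have "1 / (3 * powD U (2/3)) = powD U (-2/3) / 3"
    using powD_minus[of U "2/3"] by (simp add: field_simps)
  then show ?thesis unfolding Kf_def K_def Q_def Jf_eq_J[OF assms] by (simp only:)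
qed

lemma f_gK_eq_K_partials:
  assumes "K_domain U W X Y"
  shows "gK U W X Y = K_W U W X Y" and "f1 U W X Y = - K_U U W X Y"
    and "f2 U W X Y = \<i> * K_Y U W X Y" and "f3 U W X Y = - \<i> * K_X U W X Y"
proof -
  have off_slit: "Kf u W X Y = K u W X Y" if "u \<notin> \<real>\<^sub>\<ge>\<^sub>0" for u W X Y
  proof -
    have "u \<noteq> 0" using that by auto
    then show ?thesis by (rule Kf_eq_K)
  qed
  then have fibres: "(\<lambda>w. Kf U w X Y) = (\<lambda>w. K U w X Y)" "(\<lambda>x. Kf U W x Y) = (\<lambda>x. K U W x Y)"
    "(\<lambda>y. Kf U W X y) = (\<lambda>y. K U W X y)"
    using K_domainD(1)[OF assms] by simp_all
  have "((\<lambda>u. Kf u W X Y) has_field_derivative K_U U W X Y) (at U)"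
    by (rule has_field_derivative_transform_within_open[OF K_has_partial_derivatives(1)[OF assms]
          open_Compl[OF closed_nonneg_Reals_complex]])
       (use K_domainD(1)[OF assms] off_slit in auto)
  then show "f1 U W X Y = - K_U U W X Y" by (simp add: f1_def DERIV_imp_deriv)
  show "gK U W X Y = K_W U W X Y" "f2 U W X Y = \<i> * K_Y U W X Y" "f3 U W X Y = - \<i> * K_X U W X Y"
    using K_has_partial_derivatives[OF assms]
    by (simp_all add: gK_def f2_def f3_def fibres DERIV_imp_deriv)
qed

lemma R_eq_quotients:
  assumes "K_domain U W X Y"
  shows "R1 U W X Y = - K_U U W X Y / (1 + K_W U W X Y)"
    and "R2 U W X Y = (\<i> * K_Y U W X Y - K_W U W X Y * (\<i> * X)) / (1 + K_W U W X Y)"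
    and "R3 U W X Y = (- \<i> * K_X U W X Y - K_W U W X Y * (- \<i> * Y)) / (1 + K_W U W X Y)"
  using f_gK_eq_K_partials[OF assms] by (simp_all add: R1_def R2_def R3_def)

lemma open_K_domain_slices:
  "open {w. K_domain U w X Y}" "open {x. K_domain U W x Y}" "open {y. K_domain U W X y}"
  by (cases "U \<in> \<real>\<^sub>\<ge>\<^sub>0";
      auto simp: K_domain_def J_def intro!: open_preimage_not_nonpos_Reals continuous_intros)+

lemma dW_eq_quotient:
  assumes "K_domain U W X Y" "1 + K_W U W X Y \<noteq> 0"
    and "\<And>w. K_domain U w X Y \<Longrightarrow> F U w X Y = N U w X Y / (1 + K_W U w X Y)"
    and "((\<lambda>w. N U w X Y) has_field_derivative N') (at W)"
  shows "dW F U W X Y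
    = (N' * (1 + K_W U W X Y) - N U W X Y * K_WW U W X Y) / (1 + K_W U W X Y)^2"
  unfolding dW_def using assms K_W_has_partial_derivatives(1)[OF assms(1)]
  by (intro deriv_quotient_on_open[OF open_K_domain_slices(1)]) (auto intro!: derivative_eq_intros)

lemma dX_eq_quotient:
  assumes "K_domain U W X Y" "1 + K_W U W X Y \<noteq> 0"
    and "\<And>x. K_domain U W x Y \<Longrightarrow> F U W x Y = N U W x Y / (1 + K_W U W x Y)"
    and "((\<lambda>x. N U W x Y) has_field_derivative N') (at X)"
  shows "dX F U W X Y
    = (N' * (1 + K_W U W X Y) - N U W X Y * K_WX U W X Y) / (1 + K_W U W X Y)^2"
  unfolding dX_def using assms K_W_has_partial_derivatives(2)[OF assms(1)]
  by (intro deriv_quotient_on_open[OF open_K_domain_slices(2)]) (auto intro!: derivative_eq_intros)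

lemma dY_eq_quotient:
  assumes "K_domain U W X Y" "1 + K_W U W X Y \<noteq> 0"
    and "\<And>y. K_domain U W X y \<Longrightarrow> F U W X y = N U W X y / (1 + K_W U W X y)"
    and "((\<lambda>y. N U W X y) has_field_derivative N') (at Y)"
  shows "dY F U W X Y
    = (N' * (1 + K_W U W X Y) - N U W X Y * K_WY U W X Y) / (1 + K_W U W X Y)^2"
  unfolding dY_def using assms K_W_has_partial_derivatives(3)[OF assms(1)]
  by (intro deriv_quotient_on_open[OF open_K_domain_slices(3)]) (auto intro!: derivative_eq_intros)

section \<open>Growth at infinity on the pointwise shadow of \<open>B(rho)\<close>\<close>

(* What Z \<in> B(rho) gives pointwise (inBall_in_ball_region), together with |U| \<ge> L. *)
definition ball_region :: "real \<Rightarrow> real \<Rightarrow> (complex \<times> complex \<times> complex \<times> complex) set" where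
  "ball_region rho L = {(U, W, X, Y). U \<notin> \<real>\<^sub>\<ge>\<^sub>0 \<and> L \<le> cmod U
     \<and> cmod W \<le> rho * cmod U powr (-8/3) \<and> cmod X \<le> rho * cmod U powr (-4/3)
     \<and> cmod Y \<le> rho * cmod U powr (-4/3)}"

definition ball_at_infinity :: "real \<Rightarrow> (complex \<times> complex \<times> complex \<times> complex) filter" where
  "ball_at_infinity rho = (INF L. principal (ball_region rho L))"

lemma eventually_ball_at_infinity:
  "eventually P (ball_at_infinity rho) \<longleftrightarrow> (\<exists>L. \<forall>p\<in>ball_region rho L. P p)"
proof -
  have "\<exists>L\<in>UNIV. principal (ball_region rho L)
      \<le> inf (principal (ball_region rho a)) (principal (ball_region rho b))" for a b
    by (rule bexI[of _ "max a b"]) (auto simp: inf_principal ball_region_def)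
  then show ?thesis
    unfolding ball_at_infinity_def by (subst eventually_INF_base) (auto simp: eventually_principal)
qed

lemma eventually_in_ball_region: "\<forall>\<^sub>F p in ball_at_infinity rho. p \<in> ball_region rho L"
  by (auto simp: eventually_ball_at_infinity)

lemma filterlim_norm_ball_at_infinity:
  "filterlim (\<lambda>(U, W, X, Y). cmod U) at_top (ball_at_infinity rho)"
  unfolding filterlim_at_top
  by (auto simp: eventually_ball_at_infinity ball_region_def)

definition pow_bounded :: "real \<Rightarrow> real \<Rightarrow> (complex \<Rightarrow> complex \<Rightarrow> complex \<Rightarrow> complex \<Rightarrow> complex) \<Rightarrow> bool"
  where "pow_bounded rho e F \<longleftrightarrow>
    (\<exists>c. \<forall>\<^sub>F (U, W, X, Y) in ball_at_infinity rho. cmod (F U W X Y) \<le> c * cmod U powr e)"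

lemma pow_boundedI:
  assumes "\<forall>\<^sub>F (U, W, X, Y) in ball_at_infinity rho. cmod (F U W X Y) \<le> c * cmod U powr e"
  shows "pow_bounded rho e F"
  using assms by (auto simp: pow_bounded_def)

lemma pow_boundedE:
  assumes "pow_bounded rho e F"
  obtains c where "0 \<le> c"
    and "\<forall>\<^sub>F (U, W, X, Y) in ball_at_infinity rho. cmod (F U W X Y) \<le> c * cmod U powr e"
proof -
  obtain c where "\<forall>\<^sub>F (U, W, X, Y) in ball_at_infinity rho. cmod (F U W X Y) \<le> c * cmod U powr e"
    using assms by (auto simp: pow_bounded_def)
  then have "\<forall>\<^sub>F (U, W, X, Y) in ball_at_infinity rho. cmod (F U W X Y) \<le> max c 0 * cmod U powr e"
    by eventually_elim (clarsimp, erule order_trans, simp add: mult_right_mono)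
  then show thesis by (rule that[rotated]) simp
qed

lemma pow_bounded_cong:
  assumes "pow_bounded rho e G"
    and "\<forall>\<^sub>F (U, W, X, Y) in ball_at_infinity rho. F U W X Y = G U W X Y"
  shows "pow_bounded rho e F"
proof -
  obtain c where "\<forall>\<^sub>F (U, W, X, Y) in ball_at_infinity rho. cmod (G U W X Y) \<le> c * cmod U powr e"
    using assms(1) by (auto simp: pow_bounded_def)
  with assms(2)
  have "\<forall>\<^sub>F (U, W, X, Y) in ball_at_infinity rho. cmod (F U W X Y) \<le> c * cmod U powr e"
    by eventually_elim auto
  then show ?thesis by (rule pow_boundedI)
qed

lemma pow_bounded_mono:
  assumes "pow_bounded rho e F" "e \<le> e'"
  shows "pow_bounded rho e' F"
proof -
  obtain c where "0 \<le> c"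
    and bound: "\<forall>\<^sub>F (U, W, X, Y) in ball_at_infinity rho. cmod (F U W X Y) \<le> c * cmod U powr e"
    using assms(1) by (rule pow_boundedE)
  have powr_le: "c * cmod U powr e \<le> c * cmod U powr e'" if "1 \<le> cmod U" for U :: complex
    using \<open>0 \<le> c\<close> powr_mono[OF assms(2) that] by (rule mult_left_mono[rotated])
  from eventually_in_ball_region[of rho 1] bound
  have "\<forall>\<^sub>F (U, W, X, Y) in ball_at_infinity rho. cmod (F U W X Y) \<le> c * cmod U powr e'"
    by eventually_elim (auto simp: ball_region_def intro: order_trans[OF _ powr_le])
  then show ?thesis by (rule pow_boundedI)
qed

lemma pow_bounded_imp_eventually_small:
  assumes "pow_bounded rho e F" "e < 0" "0 < \<delta>"
  shows "\<forall>\<^sub>F (U, W, X, Y) in ball_at_infinity rho. cmod (F U W X Y) \<le> \<delta>"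
proof -
  obtain c where "\<forall>\<^sub>F (U, W, X, Y) in ball_at_infinity rho. cmod (F U W X Y) \<le> c * cmod U powr e"
    using assms(1) by (auto simp: pow_bounded_def)
  moreover have "((\<lambda>(U, W, X, Y). c * cmod U powr e) \<longlongrightarrow> 0) (ball_at_infinity rho)"
    using tendsto_mult_right_zero[OF tendsto_neg_powr[OF assms(2) filterlim_norm_ball_at_infinity]]
    by (simp add: case_prod_beta')
  then have "\<forall>\<^sub>F p in ball_at_infinity rho. (\<lambda>(U, W, X, Y). c * cmod U powr e) p < \<delta>"
    using assms(3) by (rule order_tendstoD(2))
  ultimately show ?thesis by eventually_elim auto
qed

lemma pow_bounded_const: "pow_bounded rho 0 (\<lambda>U W X Y. k)"
proof (rule pow_boundedI)
  show "\<forall>\<^sub>F (U, W, X, Y) in ball_at_infinity rho. cmod k \<le> cmod k * cmod U powr 0"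
    using eventually_in_ball_region[of rho 0]
    by eventually_elim (auto simp: ball_region_def)
qed

lemma pow_bounded_powD: "pow_bounded rho a (\<lambda>U W X Y. powD U a)"
proof (rule pow_boundedI)
  show "\<forall>\<^sub>F (U, W, X, Y) in ball_at_infinity rho. cmod (powD U a) \<le> 1 * cmod U powr a"
    using eventually_in_ball_region[of rho 0]
    by eventually_elim (clarsimp simp: ball_region_def, subst norm_powD, auto)
qed

lemma pow_bounded_variables:
  "pow_bounded rho (-8/3) (\<lambda>U W X Y. W)"
  "pow_bounded rho (-4/3) (\<lambda>U W X Y. X)"
  "pow_bounded rho (-4/3) (\<lambda>U W X Y. Y)"
  by (rule pow_boundedI eventually_mono[OF eventually_in_ball_region]
      | force simp: ball_region_def)+

lemma pow_bounded_mult: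
  assumes "pow_bounded rho e1 F" "pow_bounded rho e2 G"
  shows "pow_bounded rho (e1 + e2) (\<lambda>U W X Y. F U W X Y * G U W X Y)"
proof -
  obtain c1 where "0 \<le> c1"
    and F: "\<forall>\<^sub>F (U, W, X, Y) in ball_at_infinity rho. cmod (F U W X Y) \<le> c1 * cmod U powr e1"
    using assms(1) by (rule pow_boundedE)
  obtain c2 where
    G: "\<forall>\<^sub>F (U, W, X, Y) in ball_at_infinity rho. cmod (G U W X Y) \<le> c2 * cmod U powr e2"
    using assms(2) by (rule pow_boundedE)
  from F G have "\<forall>\<^sub>F (U, W, X, Y) in ball_at_infinity rho.
      cmod (F U W X Y * G U W X Y) \<le> (c1 * c2) * cmod U powr (e1 + e2)"
  proof eventually_elim
    case (elim p)
    obtain U W X Y where p: "p = (U, W, X, Y)" by (cases p) auto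
    have "cmod (F U W X Y) * cmod (G U W X Y) \<le> (c1 * cmod U powr e1) * (c2 * cmod U powr e2)"
      using elim \<open>0 \<le> c1\<close> by (intro mult_mono) (auto simp: p)
    then show ?case by (simp add: p norm_mult powr_add mult_ac)
  qed
  then show ?thesis by (rule pow_boundedI)
qed

lemma pow_bounded_triangle:
  assumes "pow_bounded rho e1 F" "pow_bounded rho e2 G"
    and "\<And>a b. cmod (H a b) \<le> cmod a + cmod b"
  shows "pow_bounded rho (max e1 e2) (\<lambda>U W X Y. H (F U W X Y) (G U W X Y))"
proof -
  have "pow_bounded rho (max e1 e2) F" "pow_bounded rho (max e1 e2) G"
    using assms(1,2) by (auto intro: pow_bounded_mono)
  then obtain c1 c2 where
    F: "\<forall>\<^sub>F (U, W, X, Y) in ball_at_infinity rho. cmod (F U W X Y) \<le> c1 * cmod U powr max e1 e2"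
    and G: "\<forall>\<^sub>F (U, W, X, Y) in ball_at_infinity rho. cmod (G U W X Y) \<le> c2 * cmod U powr max e1 e2"
    by (auto simp: pow_bounded_def)
  from F G have "\<forall>\<^sub>F (U, W, X, Y) in ball_at_infinity rho.
      cmod (H (F U W X Y) (G U W X Y)) \<le> (c1 + c2) * cmod U powr max e1 e2"
    by eventually_elim (clarsimp, rule order_trans[OF assms(3)], simp add: distrib_right)
  then show ?thesis by (rule pow_boundedI)
qed

lemma pow_bounded_add:
  "pow_bounded rho e1 F \<Longrightarrow> pow_bounded rho e2 G \<Longrightarrow>
    pow_bounded rho (max e1 e2) (\<lambda>U W X Y. F U W X Y + G U W X Y)"
  by (rule pow_bounded_triangle) (auto intro: norm_triangle_ineq)

lemma pow_bounded_diff: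
  "pow_bounded rho e1 F \<Longrightarrow> pow_bounded rho e2 G \<Longrightarrow>
    pow_bounded rho (max e1 e2) (\<lambda>U W X Y. F U W X Y - G U W X Y)"
  by (rule pow_bounded_triangle) (auto intro: norm_triangle_ineq4)

lemma pow_bounded_minus:
  "pow_bounded rho e F \<Longrightarrow> pow_bounded rho e (\<lambda>U W X Y. - F U W X Y)"
  by (simp add: pow_bounded_def)

lemma pow_bounded_power:
  "pow_bounded rho e F \<Longrightarrow> pow_bounded rho (real n * e) (\<lambda>U W X Y. F U W X Y ^ n)"
proof (induction n)
  case 0
  then show ?case using pow_bounded_const[of rho 1] by simp
next
  case (Suc n)
  then have "pow_bounded rho (e + real n * e) (\<lambda>U W X Y. F U W X Y * F U W X Y ^ n)"
    by (intro pow_bounded_mult)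
  then show ?case by (simp add: algebra_simps)
qed

lemma pow_bounded_divide:
  assumes "pow_bounded rho e F"
    and "\<forall>\<^sub>F (U, W, X, Y) in ball_at_infinity rho. \<delta> \<le> cmod (G U W X Y)" and "0 < \<delta>"
  shows "pow_bounded rho e (\<lambda>U W X Y. F U W X Y / G U W X Y)"
proof -
  obtain c where "0 \<le> c"
    and F: "\<forall>\<^sub>F (U, W, X, Y) in ball_at_infinity rho. cmod (F U W X Y) \<le> c * cmod U powr e"
    using assms(1) by (rule pow_boundedE)
  from F assms(2) have "\<forall>\<^sub>F (U, W, X, Y) in ball_at_infinity rho.
      cmod (F U W X Y / G U W X Y) \<le> (c / \<delta>) * cmod U powr e"
  proof eventually_elim
    case (elim p)
    obtain U W X Y where p: "p = (U, W, X, Y)" by (cases p) auto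
    have "cmod (F U W X Y) / cmod (G U W X Y) \<le> (c * cmod U powr e) / \<delta>"
      using elim \<open>0 \<le> c\<close> \<open>0 < \<delta>\<close> by (intro frac_le) (auto simp: p)
    then show ?case by (simp add: p norm_divide)
  qed
  then show ?thesis by (rule pow_boundedI)
qed

lemmas pow_bounded_intros = pow_bounded_mult pow_bounded_add pow_bounded_diff pow_bounded_minus
  pow_bounded_power pow_bounded_powD pow_bounded_variables pow_bounded_const

section \<open>Bounds for \<open>J\<close>, \<open>K\<close> and \<open>R\<close>\<close>

lemma pow_bounded_J_partials:
  "pow_bounded rho (-2) J" "pow_bounded rho (-3) J_U" "pow_bounded rho (-4/3) J_W"
  "pow_bounded rho (-2/3) J_X" "pow_bounded rho (-2/3) J_Y" "pow_bounded rho (-7/3) J_UW"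
  "pow_bounded rho (-5/3) J_UX" "pow_bounded rho (-5/3) J_UY"
  unfolding J_def[abs_def] J_U_def[abs_def] J_W_def[abs_def] J_X_def[abs_def] J_Y_def[abs_def]
    J_UW_def[abs_def] J_UX_def[abs_def] J_UY_def[abs_def]
  by (rule pow_bounded_mono, (rule pow_bounded_intros)+, simp)+

lemma eventually_J_small: "\<forall>\<^sub>F (U, W, X, Y) in ball_at_infinity rho. cmod (J U W X Y) \<le> 1/2"
  by (rule pow_bounded_imp_eventually_small[OF pow_bounded_J_partials(1)]) auto

lemma eventually_K_domain: "\<forall>\<^sub>F (U, W, X, Y) in ball_at_infinity rho. K_domain U W X Y"
  using eventually_J_small eventually_in_ball_region[of rho 0]
  by eventually_elim (auto simp: K_domain_def ball_region_def one_plus_not_nonpos_Reals)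

lemma pow_bounded_Q:
  assumes "s \<in> \<real>" "Re s \<le> 0"
  shows "pow_bounded rho 0 (Q s)"
proof (rule pow_boundedI)
  show "\<forall>\<^sub>F (U, W, X, Y) in ball_at_infinity rho.
      cmod (Q s U W X Y) \<le> (1/2) powr Re s * cmod U powr 0"
    using eventually_J_small eventually_in_ball_region[of rho 0]
  proof eventually_elim
    case (elim p)
    obtain U W X Y where p: "p = (U, W, X, Y)" by (cases p) auto
    have "U \<noteq> 0" using elim by (auto simp: p ball_region_def)
    have "1/2 \<le> cmod (1 + J U W X Y)" using elim by (intro norm_one_plus_ge) (simp add: p)
    then have "cmod (1 + J U W X Y) powr Re s \<le> (1/2) powr Re s"
      by (intro powr_mono2' assms(2)) auto
    then show ?case
      using \<open>U \<noteq> 0\<close> by (simp add: p Q_def norm_powr_real_powr'[OF assms(1)])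
  qed
qed

lemma pow_bounded_Q_minus_one: "pow_bounded rho (-2) (\<lambda>U W X Y. Q (-1/2) U W X Y - 1)"
proof -
  obtain c where
    J: "\<forall>\<^sub>F (U, W, X, Y) in ball_at_infinity rho. cmod (J U W X Y) \<le> c * cmod U powr (-2)"
    using pow_bounded_J_partials(1) by (auto simp: pow_bounded_def)
  from J eventually_J_small have "\<forall>\<^sub>F (U, W, X, Y) in ball_at_infinity rho.
      cmod (Q (-1/2) U W X Y - 1) \<le> (2 * c) * cmod U powr (-2)"
  proof eventually_elim
    case (elim p)
    obtain U W X Y where p: "p = (U, W, X, Y)" by (cases p) auto
    have "cmod (Q (-1/2) U W X Y - 1) \<le> 2 * cmod (J U W X Y)"
      unfolding Q_def using elim by (intro norm_one_plus_powr_minus_half_minus_one) (simp add: p)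
    then show ?case using elim by (simp add: p)
  qed
  then show ?thesis by (rule pow_boundedI)
qed

lemma pow_bounded_K_partials:
  "pow_bounded rho (-11/3) K_U" "pow_bounded rho (-2) K_W" "pow_bounded rho (-4/3) K_X"
  "pow_bounded rho (-4/3) K_Y" "pow_bounded rho (-3) K_UW" "pow_bounded rho (-7/3) K_UX"
  "pow_bounded rho (-7/3) K_UY" "pow_bounded rho (2/3) K_WW" "pow_bounded rho (-5/3) K_WX"
  "pow_bounded rho (-5/3) K_WY" "pow_bounded rho (-2) K_XX" "pow_bounded rho (-2) K_XY"
  "pow_bounded rho (-2) K_YY"
  unfolding K_U_def[abs_def] K_W_def[abs_def] K_X_def[abs_def] K_Y_def[abs_def]
    K_UW_def[abs_def] K_UX_def[abs_def] K_UY_def[abs_def] K_WW_def[abs_def] K_WX_def[abs_def]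
    K_WY_def[abs_def] K_XX_def[abs_def] K_XY_def[abs_def] K_YY_def[abs_def] H2_def
  \<comment> \<open>pow_bounded_Q_minus_one is tried before pow_bounded_diff, which would only give
     \<open>Q (-1/2) - 1 = O(1)\<close> and spoil the exponent of \<open>K_U\<close>.\<close>
  by (rule pow_bounded_mono, (rule pow_bounded_Q_minus_one pow_bounded_Q pow_bounded_J_partials
      pow_bounded_intros | (simp; fail))+)+

lemma eventually_one_plus_K_W_large:
  "\<forall>\<^sub>F (U, W, X, Y) in ball_at_infinity rho. 1/2 \<le> cmod (1 + K_W U W X Y)"
  "\<forall>\<^sub>F (U, W, X, Y) in ball_at_infinity rho. 1/4 \<le> cmod ((1 + K_W U W X Y)^2)"
proof -
  have small: "\<forall>\<^sub>F (U, W, X, Y) in ball_at_infinity rho. cmod (K_W U W X Y) \<le> 1/2"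
    by (rule pow_bounded_imp_eventually_small[OF pow_bounded_K_partials(2)]) auto
  then show "\<forall>\<^sub>F (U, W, X, Y) in ball_at_infinity rho. 1/2 \<le> cmod (1 + K_W U W X Y)"
    by eventually_elim (simp only: case_prod_unfold, erule norm_one_plus_ge)
  from small show "\<forall>\<^sub>F (U, W, X, Y) in ball_at_infinity rho. 1/4 \<le> cmod ((1 + K_W U W X Y)^2)"
    by eventually_elim (simp only: case_prod_unfold, erule norm_one_plus_square_ge)
qed

lemma pow_bounded_cong_regular:
  assumes "\<And>U W X Y. K_domain U W X Y \<Longrightarrow> 1 + K_W U W X Y \<noteq> 0 \<Longrightarrow> F U W X Y = G U W X Y"
    and "pow_bounded rho e G"
  shows "pow_bounded rho e F"
  using assms(2)
proof (rule pow_bounded_cong)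
  show "\<forall>\<^sub>F (U, W, X, Y) in ball_at_infinity rho. F U W X Y = G U W X Y"
    using eventually_K_domain eventually_one_plus_K_W_large(1)
    by eventually_elim (auto intro!: assms(1))
qed

lemma pow_bounded_R_partials:
  "pow_bounded rho (-11/3) R1" "pow_bounded rho (-3) (dW R1)"
  "pow_bounded rho (-7/3) (dX R1)" "pow_bounded rho (-7/3) (dY R1)"
  "pow_bounded rho (-4/3) R2" "pow_bounded rho (-2/3) (dW R2)"
  "pow_bounded rho (-2) (dX R2)" "pow_bounded rho (-2) (dY R2)"
  "pow_bounded rho (-4/3) R3" "pow_bounded rho (-2/3) (dW R3)"
  "pow_bounded rho (-2) (dX R3)" "pow_bounded rho (-2) (dY R3)"
  \<comment> \<open>The product rule leaves summands \<open>0 * _\<close>,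
     which are removed first: bounded termwise they would carry the exponent of the other factor.\<close>
  by (rule pow_bounded_cong_regular,
      (rule R_eq_quotients dW_eq_quotient dX_eq_quotient dY_eq_quotient derivative_eq_intros
         K_U_has_partial_derivatives K_W_has_partial_derivatives K_X_has_partial_derivatives
         K_Y_has_partial_derivatives refl | assumption)+,
      (simp only: mult_zero_left mult_zero_right add_0_left add_0_right diff_zero)?,
      rule pow_bounded_mono,
      (rule pow_bounded_divide pow_bounded_K_partials eventually_one_plus_K_W_large
         pow_bounded_intros | (simp; fail))+)+

section \<open>Weighted norms\<close>

lemma pow_bounded_list_uniform:
  assumes "list_all (\<lambda>(e, F). pow_bounded rho e F) Fs"
  shows "\<exists>c\<ge>0. \<forall>\<^sub>F (U, W, X, Y) in ball_at_infinity rho.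
    \<forall>(e, F)\<in>set Fs. cmod (F U W X Y) \<le> c * cmod U powr e"
  using assms
proof (induction Fs)
  case Nil
  show ?case by auto
next
  case (Cons eF Fs)
  obtain e F where eF: "eF = (e, F)" by (cases eF)
  obtain c1 where "0 \<le> c1"
    and head: "\<forall>\<^sub>F (U, W, X, Y) in ball_at_infinity rho. cmod (F U W X Y) \<le> c1 * cmod U powr e"
    using Cons.prems by (auto simp: eF elim: pow_boundedE)
  obtain c2 where tail: "\<forall>\<^sub>F (U, W, X, Y) in ball_at_infinity rho.
      \<forall>(e, F)\<in>set Fs. cmod (F U W X Y) \<le> c2 * cmod U powr e"
    using Cons by auto
  have le_max: "c * cmod U powr e' \<le> max c1 c2 * cmod U powr e'" if "c = c1 \<or> c = c2"
    for c e' and U :: complex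
    using that by (intro mult_right_mono) auto
  from head tail have "\<forall>\<^sub>F (U, W, X, Y) in ball_at_infinity rho.
      \<forall>(e, F)\<in>set (eF # Fs). cmod (F U W X Y) \<le> max c1 c2 * cmod U powr e"
    by eventually_elim (fastforce simp: eF intro: order_trans[OF _ le_max])
  then show ?case using \<open>0 \<le> c1\<close> by (intro exI[of _ "max c1 c2"]) auto
qed

lemma Dk_in_slit_plane_and_large:
  assumes "0 < beta0" "beta0 < pi/2" "0 < L"
    and "2 * L * (1 + tan beta0) \<le> kappa" "U \<in> Dk beta0 kappa"
  shows "U \<notin> \<real>\<^sub>\<ge>\<^sub>0" and "L \<le> cmod U"
proof -
  define t where "t = tan beta0"
  have "0 < t" unfolding t_def using assms(1,2) by (simp add: tan_gt_zero)
  have kappa: "2 * L + 2 * (L * t) \<le> kappa" "0 \<le> L * t"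
    using assms(3,4) \<open>0 < t\<close> by (simp_all add: t_def algebra_simps)
  have D: "t * Re U + kappa \<le> \<bar>Im U\<bar>" using assms(5) by (simp add: Dk_def t_def)
  show "U \<notin> \<real>\<^sub>\<ge>\<^sub>0"
  proof
    assume "U \<in> \<real>\<^sub>\<ge>\<^sub>0"
    then have "Im U = 0" "0 \<le> t * Re U" using \<open>0 < t\<close> by (auto simp: complex_nonneg_Reals_iff)
    then show False using D kappa assms(3) by linarith
  qed
  show "L \<le> cmod U"
  proof (cases "- kappa / 2 \<le> t * Re U")
    case True
    then have "L \<le> \<bar>Im U\<bar>" using D kappa by linarith
    then show ?thesis using abs_Im_le_cmod[of U] by linarith
  next
    case False
    then have "0 < t * (- Re U - L)" using kappa assms(3) by (simp add: algebra_simps)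
    then have "L < - Re U" using \<open>0 < t\<close> by (simp add: zero_less_mult_iff)
    then show ?thesis using abs_Re_le_cmod[of U] by linarith
  qed
qed

lemma wnorm_ge_pointwise:
  assumes "U \<in> Dk beta0 kappa"
  shows "ereal (cmod U powr nu * cmod (F U)) \<le> wnorm beta0 kappa nu F"
  unfolding wnorm_def using assms by (rule SUP_upper)

lemma norm_le_of_wnorm_le:
  assumes "U \<in> Dk beta0 kappa" "U \<noteq> 0" "wnorm beta0 kappa nu F \<le> ereal r"
  shows "cmod (F U) \<le> r * cmod U powr (- nu)"
proof -
  have "cmod U powr nu * cmod (F U) \<le> r"
    using order_trans[OF wnorm_ge_pointwise[OF assms(1)] assms(3)] by simp
  then have "cmod U powr (- nu) * (cmod U powr nu * cmod (F U)) \<le> cmod U powr (- nu) * r"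
    by (rule mult_left_mono) simp
  then show ?thesis using assms(2) by (simp add: powr_minus field_simps)
qed

lemma wnorm_le_of_norm_le:
  assumes "\<And>U. U \<in> Dk beta0 kappa \<Longrightarrow> U \<noteq> 0 \<and> cmod (F U) \<le> C * cmod U powr (- nu)"
  shows "wnorm beta0 kappa nu F \<le> ereal C"
  unfolding wnorm_def
proof (rule SUP_least)
  fix U assume "U \<in> Dk beta0 kappa"
  with assms have "U \<noteq> 0" "cmod (F U) \<le> C * cmod U powr (- nu)" by auto
  then have "cmod U powr nu * cmod (F U) \<le> cmod U powr nu * (C * cmod U powr (- nu))"
    by (intro mult_left_mono) auto
  also have "\<dots> = C" using \<open>U \<noteq> 0\<close> by (simp add: powr_minus field_simps)
  finally show "ereal (cmod U powr nu * cmod (F U)) \<le> ereal C" by simp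
qed

lemma inBall_in_ball_region:
  assumes "inBall beta0 kappa rho W X Y" "U \<in> Dk beta0 kappa" "U \<notin> \<real>\<^sub>\<ge>\<^sub>0" "L \<le> cmod U"
  shows "(U, W U, X U, Y U) \<in> ball_region rho L"
proof -
  let ?nW = "wnorm beta0 kappa (8/3) W" and ?nX = "wnorm beta0 kappa (4/3) X"
    and ?nY = "wnorm beta0 kappa (4/3) Y"
  have nonneg: "0 \<le> wnorm beta0 kappa nu F" for nu F
    by (rule order_trans[OF _ wnorm_ge_pointwise[OF assms(2)]]) simp
  have "?nW \<le> ?nW + ?nX + ?nY" "?nX \<le> ?nW + ?nX + ?nY" "?nY \<le> ?nW + ?nX + ?nY"
    by (intro add_increasing add_increasing2 add_nonneg_nonneg nonneg order_refl)+
  moreover have "?nW + ?nX + ?nY \<le> ereal rho" using assms(1) by (simp add: inBall_def)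
  ultimately have "?nW \<le> ereal rho" "?nX \<le> ereal rho" "?nY \<le> ereal rho"
    by (blast intro: order_trans)+
  moreover have "U \<noteq> 0" using assms(3) by auto
  ultimately show ?thesis
    using assms(3,4) norm_le_of_wnorm_le[OF assms(2)] by (simp add: ball_region_def)
qed

lemma weighted_norms_bounded:
  assumes "0 < beta0" "beta0 < pi/2"
    and "list_all (\<lambda>(e, F). pow_bounded rho e F) Fs"
  shows "\<exists>kappa0>0. \<exists>C>0. \<forall>kappa\<ge>kappa0. \<forall>W X Y. inBall beta0 kappa rho W X Y \<longrightarrow>
    (\<forall>(e, F)\<in>set Fs. wnorm beta0 kappa (- e) (\<lambda>U. F U (W U) (X U) (Y U)) \<le> ereal C)"
proof -
  obtain c where "0 \<le> c" and "\<forall>\<^sub>F (U, W, X, Y) in ball_at_infinity rho.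
      \<forall>(e, F)\<in>set Fs. cmod (F U W X Y) \<le> c * cmod U powr e"
    using pow_bounded_list_uniform[OF assms(3)] by blast
  then obtain L where L: "\<forall>p\<in>ball_region rho L. (\<lambda>(U, W, X, Y).
      \<forall>(e, F)\<in>set Fs. cmod (F U W X Y) \<le> c * cmod U powr e) p"
    unfolding eventually_ball_at_infinity by blast
  define L' where "L' = max L 1"
  define kappa0 where "kappa0 = 2 * L' * (1 + tan beta0)"
  have "0 < L'" by (simp add: L'_def)
  have bound: "wnorm beta0 kappa (- e) (\<lambda>U. F U (W U) (X U) (Y U)) \<le> ereal c"
    if "kappa0 \<le> kappa" "inBall beta0 kappa rho W X Y" "(e, F) \<in> set Fs" for kappa W X Y e F
  proof (rule wnorm_le_of_norm_le)
    fix U assume U: "U \<in> Dk beta0 kappa"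
    note large = Dk_in_slit_plane_and_large[OF assms(1,2) \<open>0 < L'\<close> _ U]
    have "(U, W U, X U, Y U) \<in> ball_region rho L'"
      using inBall_in_ball_region[OF that(2) U] large that(1) kappa0_def by blast
    then have "(U, W U, X U, Y U) \<in> ball_region rho L"
      by (auto simp: L'_def ball_region_def)
    with L that(3) have "cmod (F U (W U) (X U) (Y U)) \<le> c * cmod U powr e" by fastforce
    moreover have "U \<noteq> 0" using large that(1) kappa0_def by auto
    ultimately show "U \<noteq> 0 \<and> cmod (F U (W U) (X U) (Y U)) \<le> c * cmod U powr (- (- e))" by simp
  qed
  show ?thesis
  proof (rule exI[of _ kappa0], intro conjI exI[of _ "c + 1"] allI impI ballI)
    show "0 < kappa0"
      using \<open>0 < L'\<close> assms(1,2) by (simp add: kappa0_def tan_gt_zero add_pos_pos)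
    show "0 < c + 1" using \<open>0 \<le> c\<close> by simp
    fix kappa W X Y p
    assume "kappa0 \<le> kappa" "inBall beta0 kappa rho W X Y" "p \<in> set Fs"
    then show "case p of (e, F) \<Rightarrow> wnorm beta0 kappa (- e) (\<lambda>U. F U (W U) (X U) (Y U)) \<le> ereal (c + 1)"
      by (cases p) (auto intro: order_trans[OF bound])
  qed
qed

theorem lemma5p5:
  fixes beta0 rho :: real
  assumes "0 < beta0" and "beta0 < pi / 2" and "0 < rho"
  shows "\<exists>kappa0 > 0. \<exists>C > 0. \<forall>kappa \<ge> kappa0. \<forall>W X Y.
    inBall beta0 kappa rho W X Y \<longrightarrow>
      wnorm beta0 kappa (11/3) (\<lambda>U. R1 U (W U) (X U) (Y U)) \<le> ereal C \<and>
      wnorm beta0 kappa (4/3) (\<lambda>U. R2 U (W U) (X U) (Y U)) \<le> ereal C \<and>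
      wnorm beta0 kappa (4/3) (\<lambda>U. R3 U (W U) (X U) (Y U)) \<le> ereal C \<and>
      wnorm beta0 kappa 3 (\<lambda>U. dW R1 U (W U) (X U) (Y U)) \<le> ereal C \<and>
      wnorm beta0 kappa (7/3) (\<lambda>U. dX R1 U (W U) (X U) (Y U)) \<le> ereal C \<and>
      wnorm beta0 kappa (7/3) (\<lambda>U. dY R1 U (W U) (X U) (Y U)) \<le> ereal C \<and>
      wnorm beta0 kappa (2/3) (\<lambda>U. dW R2 U (W U) (X U) (Y U)) \<le> ereal C \<and>
      wnorm beta0 kappa 2 (\<lambda>U. dX R2 U (W U) (X U) (Y U)) \<le> ereal C \<and>
      wnorm beta0 kappa 2 (\<lambda>U. dY R2 U (W U) (X U) (Y U)) \<le> ereal C \<and>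
      wnorm beta0 kappa (2/3) (\<lambda>U. dW R3 U (W U) (X U) (Y U)) \<le> ereal C \<and>
      wnorm beta0 kappa 2 (\<lambda>U. dX R3 U (W U) (X U) (Y U)) \<le> ereal C \<and>
      wnorm beta0 kappa 2 (\<lambda>U. dY R3 U (W U) (X U) (Y U)) \<le> ereal C"
proof -
  have "list_all (\<lambda>(e, F). pow_bounded rho e F)
      [(-11/3, R1), (-4/3, R2), (-4/3, R3), (-3, dW R1), (-7/3, dX R1), (-7/3, dY R1),
       (-2/3, dW R2), (-2, dX R2), (-2, dY R2), (-2/3, dW R3), (-2, dX R3), (-2, dY R3)]"
    using pow_bounded_R_partials by simp
  from weighted_norms_bounded[OF assms(1,2) this] show ?thesis by simp
qed

end
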